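(* Let $G$ be a group containing an element of infinite order, and suppose $G$ acts on a Smale space $(X,\varphi)$. Then the action of $G$ is not free.
   Context: A Smale space $(X,\varphi)$ is an infinite compact metric space $(X,d)$ with a homeomorphism $\varphi:X\to X$ for which there exist constants $\epsilon_X>0$, $0<\lambda_X<1$ and a map $[\cdot,\cdot]$ defined on pairs $(x,y)$ with $d(x,y)<\epsilon_X$ such that, whenever both sides are defined, $[x,x]=x$, $[x,[y,z]]=[x,z]$, $[[x,y],z]=[x,z]$, $\varphi([x,y])=[\varphi(x),\varphi(y)]$, and moreover $d(\varphi(x),\varphi(y))\le\lambda_X d(x,y)$ whenever $[x,y]=y$, and $d(\varphi^{-1}(x),\varphi^{-1}(y))\le\lambda_X d(x,y)$ whenever $[x,y]=x$. An action of a group $G$ on $(X,\varphi)$ is a (continuous) homomorphism $G\to\mathrm{Homeo}(X)$, $g\mapsto(x\mapsto gx)$, such that $g\varphi(x)=\varphi(gx)$ for all $x\in X$, $g\in G$. The action is free if for every $x\in X$, $gx=x$ implies $g=e$. *)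

theory Defs
  imports "HOL-Analysis.Analysis" "HOL-Algebra.Multiplicative_Group"
begin

text \<open>The bracket br is a total function on the type, but only its values on the
  domain {(x,y) in X x X. dist x y < eps} matter; the axioms are imposed
  "whenever both sides are defined".\<close>

definition smale_space :: "'a::metric_space set \<Rightarrow> ('a \<Rightarrow> 'a) \<Rightarrow> bool" where
  "smale_space X \<phi> \<longleftrightarrow>
     compact X \<and> infinite X \<and> (\<exists>\<psi>. homeomorphism X X \<phi> \<psi>) \<and>
     (\<exists>\<epsilon>::real. \<epsilon> > 0 \<and> (\<exists>lam::real. 0 < lam \<and> lam < 1 \<and>
       (\<exists>br :: 'a \<Rightarrow> 'a \<Rightarrow> 'a.
          (\<forall>x\<in>X. \<forall>y\<in>X. dist x y < \<epsilon> \<longrightarrow> br x y \<in> X) \<and>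
          continuous_on {(x, y). x \<in> X \<and> y \<in> X \<and> dist x y < \<epsilon>} (\<lambda>p. br (fst p) (snd p)) \<and>
          (\<forall>x\<in>X. br x x = x) \<and>
          (\<forall>x\<in>X. \<forall>y\<in>X. \<forall>z\<in>X. dist y z < \<epsilon> \<and> dist x (br y z) < \<epsilon> \<and> dist x z < \<epsilon>
              \<longrightarrow> br x (br y z) = br x z) \<and>
          (\<forall>x\<in>X. \<forall>y\<in>X. \<forall>z\<in>X. dist x y < \<epsilon> \<and> dist (br x y) z < \<epsilon> \<and> dist x z < \<epsilon>
              \<longrightarrow> br (br x y) z = br x z) \<and>
          (\<forall>x\<in>X. \<forall>y\<in>X. dist x y < \<epsilon> \<and> dist (\<phi> x) (\<phi> y) < \<epsilon>
              \<longrightarrow> \<phi> (br x y) = br (\<phi> x) (\<phi> y)) \<and>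
          (\<forall>x\<in>X. \<forall>y\<in>X. dist x y < \<epsilon> \<and> br x y = y
              \<longrightarrow> dist (\<phi> x) (\<phi> y) \<le> lam * dist x y) \<and>
          (\<forall>x\<in>X. \<forall>y\<in>X. dist x y < \<epsilon> \<and> br x y = x
              \<longrightarrow> dist (inv_into X \<phi> x) (inv_into X \<phi> y) \<le> lam * dist x y))))"

definition smale_action ::
  "('g, 'b) monoid_scheme \<Rightarrow> 'a::metric_space set \<Rightarrow> ('a \<Rightarrow> 'a) \<Rightarrow> ('g \<Rightarrow> 'a \<Rightarrow> 'a) \<Rightarrow> bool" where
  "smale_action G X \<phi> act \<longleftrightarrow>
     (\<forall>g\<in>carrier G. \<exists>h. homeomorphism X X (act g) h) \<and>
     (\<forall>x\<in>X. act \<one>\<^bsub>G\<^esub> x = x) \<and>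
     (\<forall>g\<in>carrier G. \<forall>h\<in>carrier G. \<forall>x\<in>X. act (g \<otimes>\<^bsub>G\<^esub> h) x = act g (act h x)) \<and>
     (\<forall>g\<in>carrier G. \<forall>x\<in>X. act g (\<phi> x) = \<phi> (act g x))"

definition free_action :: "('g, 'b) monoid_scheme \<Rightarrow> 'a set \<Rightarrow> ('g \<Rightarrow> 'a \<Rightarrow> 'a) \<Rightarrow> bool" where
  "free_action G X act \<longleftrightarrow> (\<forall>x\<in>X. \<forall>g\<in>carrier G. act g x = x \<longrightarrow> g = \<one>\<^bsub>G\<^esub>)"

end

theory Submission
  imports Defs
begin

text \<open>A Smale space has a periodic point: chaining local stable and unstable sets through the
  bracket, a periodic pseudo-orbit (which exists by compactness) is shadowed by a true orbit
  returning arbitrarily close to its start, and a point minimising \<open>dist q (\<phi>\<^sup>P q)\<close> is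
  then periodic. By uniform expansiveness the points of period \<open>P\<close> are uniformly separated.
  If \<open>g\<close> has infinite order, the points \<open>g\<^sup>k p\<close> all have period \<open>P\<close> because \<open>g\<close>
  commutes with \<open>\<phi>\<close>; by compactness two of them are close, hence equal, so a nontrivial power
  of \<open>g\<close> fixes \<open>p\<close>.\<close>

lemma continuous_on_funpow:
  assumes "continuous_on S h" and "h ` S \<subseteq> S"
  shows "continuous_on S (h ^^ n)"
proof (induction n)
  case (Suc n)
  have "(h ^^ n) ` S \<subseteq> S"
    using assms(2) by (induction n) auto
  then have "continuous_on S (h \<circ> h ^^ n)"
    using Suc continuous_on_subset[OF assms(1)] by (intro continuous_on_compose) auto
  then show ?case by simp
qed (simp add: continuous_on_id)

lemma compact_sequence_close_pair:
  fixes s :: "nat \<Rightarrow> 'a::metric_space"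
  assumes "compact S" and "\<And>k. s k \<in> S" and "e > 0"
  obtains i j where "i < j" and "dist (s i) (s j) < e"
proof -
  obtain l and r :: "nat \<Rightarrow> nat" where r: "strict_mono r" and "(s \<circ> r) \<longlonglongrightarrow> l"
    using compact_imp_seq_compact[OF assms(1)] assms(2) unfolding seq_compact_def by metis
  then have "Cauchy (s \<circ> r)" by (simp add: LIMSEQ_imp_Cauchy)
  then obtain M where "\<forall>m\<ge>M. \<forall>n\<ge>M. dist ((s \<circ> r) m) ((s \<circ> r) n) < e"
    using metric_CauchyD assms(3) by blast
  then have "dist (s (r M)) (s (r (Suc M))) < e" by simp
  moreover have "r M < r (Suc M)" using r by (simp add: strict_mono_def)
  ultimately show ?thesis using that by blast
qed

lemma uniformly_continuous_on_iterates:
  assumes "compact S" and "continuous_on S h" and "h ` S \<subseteq> S" and "c > 0"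
  shows "\<exists>\<gamma>>0. \<forall>a\<in>S. \<forall>b\<in>S. dist a b < \<gamma> \<longrightarrow> (\<forall>m<P. dist ((h ^^ m) a) ((h ^^ m) b) \<le> c)"
proof (induction P)
  case 0 then show ?case by (intro exI[of _ 1]) simp
next
  case (Suc P)
  then obtain \<gamma> where "\<gamma> > 0"
    and \<gamma>: "\<forall>a\<in>S. \<forall>b\<in>S. dist a b < \<gamma> \<longrightarrow> (\<forall>m<P. dist ((h ^^ m) a) ((h ^^ m) b) \<le> c)"
    by blast
  have "uniformly_continuous_on S (h ^^ P)"
    using compact_uniformly_continuous[OF continuous_on_funpow[OF assms(2,3)] assms(1)] .
  then obtain d where "d > 0" and d: "\<forall>x\<in>S. \<forall>x'\<in>S. dist x' x < d \<longrightarrow> dist ((h ^^ P) x') ((h ^^ P) x) < c"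
    using assms(4) unfolding uniformly_continuous_on_def by metis
  show ?case
  proof (intro exI[of _ "min \<gamma> d"] conjI ballI impI allI)
    fix a b m assume "a \<in> S" "b \<in> S" "dist a b < min \<gamma> d" "m < Suc P"
    then show "dist ((h ^^ m) a) ((h ^^ m) b) \<le> c"
      using \<gamma> d[rule_format, of b a] by (cases "m < P") (auto simp: less_Suc_eq dist_commute)
  qed (use \<open>\<gamma> > 0\<close> \<open>d > 0\<close> in simp)
qed

lemma le_geometric_imp_nonpos:
  fixes d e lam :: real
  assumes "0 \<le> lam" and "lam < 1" and "\<And>t. d \<le> e * lam ^ t"
  shows "d \<le> 0"
proof -
  have "(\<lambda>t. e * lam ^ t) \<longlonglongrightarrow> 0"
    using assms(1,2) by (intro tendsto_mult_right_zero LIMSEQ_power_zero) auto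
  then show ?thesis
    using assms(3) by (intro LIMSEQ_le_const[of _ 0]) auto
qed

lemma funpow_commute_on:
  assumes "\<And>x. x \<in> S \<Longrightarrow> h (f x) = f (h x)" and "f ` S \<subseteq> S" and "x \<in> S"
  shows "h ((f ^^ n) x) = (f ^^ n) (h x)"
proof (induction n)
  case (Suc n)
  have "(f ^^ n) x \<in> S" using assms(2,3) by (induction n) auto
  then show ?case using assms(1) Suc by simp
qed simp

lemma homeomorphism_bij_betw: "homeomorphism S S h h' \<Longrightarrow> bij_betw h S S"
  unfolding homeomorphism_def by (intro bij_betw_byWitness[where f'=h']) auto

text \<open>Read \<open>br x y = y\<close> as "\<open>y\<close> lies in the local stable set
  of \<open>x\<close>" and \<open>br x y = x\<close> as "\<open>y\<close> lies in the local unstable set of \<open>x\<close>".\<close>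

locale smale_bracket =
  fixes X :: "'a::metric_space set" and f :: "'a \<Rightarrow> 'a"
    and \<epsilon> lam :: real and br :: "'a \<Rightarrow> 'a \<Rightarrow> 'a"
  assumes compact_X: "compact X" and X_nonempty: "X \<noteq> {}"
    and bij_f: "bij_betw f X X" and continuous_f: "continuous_on X f"
    and eps_pos: "\<epsilon> > 0" and lam_pos: "0 < lam" and lam_less_1: "lam < 1"
    and bracket_in: "\<forall>x\<in>X. \<forall>y\<in>X. dist x y < \<epsilon> \<longrightarrow> br x y \<in> X"
    and bracket_continuous:
      "continuous_on {(x, y). x \<in> X \<and> y \<in> X \<and> dist x y < \<epsilon>} (\<lambda>p. br (fst p) (snd p))"
    and bracket_self: "\<forall>x\<in>X. br x x = x"
    and bracket_right: "\<forall>x\<in>X. \<forall>y\<in>X. \<forall>z\<in>X. dist y z < \<epsilon> \<and> dist x (br y z) < \<epsilon> \<and> dist x z < \<epsilon>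
              \<longrightarrow> br x (br y z) = br x z"
    and bracket_left: "\<forall>x\<in>X. \<forall>y\<in>X. \<forall>z\<in>X. dist x y < \<epsilon> \<and> dist (br x y) z < \<epsilon> \<and> dist x z < \<epsilon>
              \<longrightarrow> br (br x y) z = br x z"
    and bracket_equivariant: "\<forall>x\<in>X. \<forall>y\<in>X. dist x y < \<epsilon> \<and> dist (f x) (f y) < \<epsilon>
              \<longrightarrow> f (br x y) = br (f x) (f y)"
    and stable_contraction: "\<forall>x\<in>X. \<forall>y\<in>X. dist x y < \<epsilon> \<and> br x y = y
              \<longrightarrow> dist (f x) (f y) \<le> lam * dist x y"
    and unstable_contraction: "\<forall>x\<in>X. \<forall>y\<in>X. dist x y < \<epsilon> \<and> br x y = x
              \<longrightarrow> dist (inv_into X f x) (inv_into X f y) \<le> lam * dist x y"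

lemma smale_spaceE:
  assumes "smale_space X f"
  obtains \<epsilon> lam br where "smale_bracket X f \<epsilon> lam br"
  using assms unfolding smale_space_def
  apply (elim conjE exE)
  subgoal premises prems for \<psi> \<epsilon> lam br
  proof (rule that[of \<epsilon> lam br], unfold_locales)
    show "X \<noteq> {}" using prems by (meson finite.emptyI)
    show "bij_betw f X X" using prems by (meson homeomorphism_bij_betw)
    show "continuous_on X f" using prems by (meson homeomorphism_cont1)
  qed (fact prems)+
  done

context smale_bracket
begin

lemma funpow_in: "x \<in> X \<Longrightarrow> (f ^^ m) x \<in> X"
  using bij_betw_funpow[OF bij_f] by (rule bij_betw_apply)

lemma funpow_eqD: "x \<in> X \<Longrightarrow> y \<in> X \<Longrightarrow> (f ^^ m) x = (f ^^ m) y \<Longrightarrow> x = y"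
  using bij_betw_imp_inj_on[OF bij_betw_funpow[OF bij_f]] by (rule inj_onD)

lemma funpow_onto: "y \<in> X \<Longrightarrow> \<exists>x\<in>X. (f ^^ m) x = y"
  by (metis bij_betw_funpow[OF bij_f] bij_betw_imp_surj_on imageE)

lemma continuous_on_funpow_f: "continuous_on X (f ^^ m)"
  using continuous_f bij_betw_imp_surj_on[OF bij_f] by (intro continuous_on_funpow) auto

lemma lam_pow_le_1: "lam ^ n \<le> 1"
  using lam_pos lam_less_1 by (simp add: power_le_one)

lemma lam_pow_nonneg: "lam ^ n \<ge> 0"
  using lam_pos by simp

lemma lam_pow_mult_le: "0 \<le> x \<Longrightarrow> lam ^ n * x \<le> x"
  using mult_left_le_one_le[OF _ lam_pow_nonneg lam_pow_le_1] by blast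

lemma lam_pow_dist_le: "lam ^ n * dist x y \<le> dist x y"
  by (rule lam_pow_mult_le[OF zero_le_dist])

lemma bracket_mem: "x \<in> X \<Longrightarrow> y \<in> X \<Longrightarrow> dist x y < \<epsilon> \<Longrightarrow> br x y \<in> X"
  using bracket_in by blast

lemma f_bracket:
  "x \<in> X \<Longrightarrow> y \<in> X \<Longrightarrow> dist x y < \<epsilon> \<Longrightarrow> dist (f x) (f y) < \<epsilon> \<Longrightarrow> f (br x y) = br (f x) (f y)"
  using bracket_equivariant by blast

lemma bracket_funpow:
  assumes "x \<in> X" "y \<in> X" and "\<forall>i\<le>m. dist ((f ^^ i) x) ((f ^^ i) y) < \<epsilon>"
  shows "(f ^^ m) (br x y) = br ((f ^^ m) x) ((f ^^ m) y)"
  using assms(3)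
proof (induction m)
  case (Suc m)
  then have "(f ^^ m) (br x y) = br ((f ^^ m) x) ((f ^^ m) y)" by simp
  moreover have "dist ((f ^^ m) x) ((f ^^ m) y) < \<epsilon>" "dist ((f ^^ Suc m) x) ((f ^^ Suc m) y) < \<epsilon>"
    using Suc.prems by auto
  ultimately show ?case
    using f_bracket[OF funpow_in funpow_in] assms(1,2) by simp
qed simp

lemma bracket_stable:
  "x \<in> X \<Longrightarrow> y \<in> X \<Longrightarrow> dist x y < \<epsilon> \<Longrightarrow> dist x (br x y) < \<epsilon> \<Longrightarrow> br x (br x y) = br x y"
  using bracket_right[rule_format, of x x y] by simp

lemma bracket_unstable:
  "x \<in> X \<Longrightarrow> y \<in> X \<Longrightarrow> dist x y < \<epsilon> \<Longrightarrow> dist (br x y) y < \<epsilon> \<Longrightarrow> br (br x y) y = br x y"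
  using bracket_left[rule_format, of x y y] by simp

lemma unstable_trans:
  assumes "u \<in> X" "a \<in> X" "b \<in> X" and "br u a = u" "br a b = a"
    and "dist u a < \<epsilon>" "dist a b < \<epsilon>" "dist u b < \<epsilon>"
  shows "br u b = u"
  using bracket_right[rule_format, of u a b] assms by simp

lemma stable_funpow:
  assumes "x \<in> X" "y \<in> X" "br x y = y" "dist x y < \<epsilon>"
  shows "br ((f ^^ m) x) ((f ^^ m) y) = (f ^^ m) y \<and> dist ((f ^^ m) x) ((f ^^ m) y) \<le> lam ^ m * dist x y"
proof (induction m)
  case (Suc m)
  let ?a = "(f ^^ m) x" and ?b = "(f ^^ m) y"
  have ab: "?a \<in> X" "?b \<in> X" using funpow_in assms by auto
  have "dist ?a ?b \<le> dist x y"
    using Suc lam_pow_dist_le[of m x y] by simp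
  then have d: "dist ?a ?b < \<epsilon>" using assms by linarith
  have "dist (f ?a) (f ?b) \<le> lam * dist ?a ?b"
    using stable_contraction ab d Suc by simp
  also have "\<dots> \<le> lam * (lam ^ m * dist x y)"
    using Suc lam_pos by (simp add: mult_left_mono)
  finally have c: "dist (f ?a) (f ?b) \<le> lam ^ Suc m * dist x y" by (simp add: mult.assoc)
  have "dist (f ?a) (f ?b) < \<epsilon>"
    using c assms(4) lam_pow_dist_le[of "Suc m" x y] by linarith
  then show ?case
    using f_bracket[OF ab d] Suc c by simp
qed (use assms in simp)

lemma unstable_step:
  assumes "a \<in> X" "b \<in> X" "br (f a) (f b) = f a" "dist (f a) (f b) < \<epsilon>"
  shows "br a b = a \<and> dist a b \<le> lam * dist (f a) (f b)"
proof -
  have fab: "f a \<in> X" "f b \<in> X" using funpow_in[of _ 1] assms(1,2) by auto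
  have "dist (inv_into X f (f a)) (inv_into X f (f b)) \<le> lam * dist (f a) (f b)"
    using unstable_contraction fab assms(3,4) by simp
  then have c: "dist a b \<le> lam * dist (f a) (f b)"
    using bij_betw_imp_inj_on[OF bij_f] assms(1,2) by (simp add: inv_into_f_f)
  moreover have "lam * dist (f a) (f b) \<le> dist (f a) (f b)"
    using lam_pow_dist_le[of 1 "f a" "f b"] by simp
  ultimately have d: "dist a b < \<epsilon>" using assms(4) by linarith
  then have "f (br a b) = f a" using f_bracket assms by simp
  then have "br a b = a"
    using funpow_eqD[of _ a 1] bracket_mem assms(1,2) d by simp
  then show ?thesis using c by simp
qed

lemma unstable_funpow:
  assumes "a \<in> X" "b \<in> X" "br ((f ^^ m) a) ((f ^^ m) b) = (f ^^ m) a"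
    and "dist ((f ^^ m) a) ((f ^^ m) b) < \<epsilon>"
  shows "br a b = a \<and> dist a b \<le> lam ^ m * dist ((f ^^ m) a) ((f ^^ m) b)"
  using assms
proof (induction m arbitrary: a b)
  case (Suc m)
  let ?D = "dist ((f ^^ Suc m) a) ((f ^^ Suc m) b)"
  have shift: "(f ^^ Suc m) a = (f ^^ m) (f a)" "(f ^^ Suc m) b = (f ^^ m) (f b)"
    by (simp_all add: funpow_swap1)
  have IH: "br (f a) (f b) = f a \<and> dist (f a) (f b) \<le> lam ^ m * ?D"
    using Suc.IH[of "f a" "f b"] Suc.prems funpow_in[of _ 1] shift by auto
  then have "dist (f a) (f b) < \<epsilon>"
    using Suc.prems(4) lam_pow_mult_le[of ?D m] by simp
  then have "br a b = a \<and> dist a b \<le> lam * dist (f a) (f b)"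
    using unstable_step Suc.prems IH by simp
  moreover have "lam * dist (f a) (f b) \<le> lam * (lam ^ m * ?D)"
    using IH lam_pos by (simp add: mult_left_mono)
  ultimately show ?case by (simp add: mult.assoc)
qed simp

lemma unstable_funpow_le:
  assumes "x \<in> X" "y \<in> X" "br ((f ^^ N) x) ((f ^^ N) y) = (f ^^ N) x"
    and "dist ((f ^^ N) x) ((f ^^ N) y) < \<epsilon>" and "i \<le> N"
  shows "br ((f ^^ i) x) ((f ^^ i) y) = (f ^^ i) x \<and>
    dist ((f ^^ i) x) ((f ^^ i) y) \<le> lam ^ (N - i) * dist ((f ^^ N) x) ((f ^^ N) y)"
proof -
  have shift: "(f ^^ (N - i)) ((f ^^ i) z) = (f ^^ N) z" for z
    using assms(5) by (simp flip: funpow_add[unfolded comp_def, THEN fun_cong])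
  show ?thesis
    using unstable_funpow[of "(f ^^ i) x" "(f ^^ i) y" "N - i"] funpow_in assms by (simp add: shift)
qed

lemma unstable_of_close_orbit:
  assumes "x \<in> X" "y \<in> X" "br x y = x" and "\<forall>j\<le>M. dist ((f ^^ j) x) ((f ^^ j) y) < \<epsilon>"
  shows "dist x y \<le> lam ^ M * dist ((f ^^ M) x) ((f ^^ M) y)"
  using unstable_funpow[OF assms(1,2)] bracket_funpow[OF assms(1,2,4)] assms(3,4) by simp

lemma stable_of_close_orbit:
  assumes "x \<in> X" "y \<in> X" "br ((f ^^ M) x) ((f ^^ M) y) = (f ^^ M) y"
    and "\<forall>j\<le>M. dist ((f ^^ j) x) ((f ^^ j) y) < \<epsilon>"
  shows "br x y = y"
  using funpow_eqD[OF bracket_mem assms(2)] bracket_funpow[OF assms(1,2,4)] assms by auto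

lemma bracket_near_left:
  assumes "\<rho> > 0"
  obtains \<eta> where "\<eta> > 0" "\<eta> \<le> \<rho>"
    and "\<forall>a\<in>X. \<forall>b\<in>X. dist a b \<le> \<eta> \<longrightarrow> dist (br a b) a \<le> \<rho>"
proof -
  let ?K = "(X \<times> X) \<inter> {p. dist (fst p) (snd p) \<le> \<epsilon>/2}"
  have "closed {p::'a \<times> 'a. dist (fst p) (snd p) \<le> \<epsilon>/2}"
    by (intro closed_Collect_le continuous_on_dist continuous_on_fst continuous_on_snd
        continuous_on_const continuous_on_id)
  then have "compact ?K" using compact_X by (intro compact_Int_closed compact_Times) auto
  moreover have "?K \<subseteq> {(x, y). x \<in> X \<and> y \<in> X \<and> dist x y < \<epsilon>}" using eps_pos by auto
  then have "continuous_on ?K (\<lambda>p. br (fst p) (snd p))"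
    by (rule continuous_on_subset[OF bracket_continuous])
  ultimately have "uniformly_continuous_on ?K (\<lambda>p. br (fst p) (snd p))"
    by (rule compact_uniformly_continuous[rotated])
  then obtain d where "d > 0"
    and d: "\<forall>p\<in>?K. \<forall>p'\<in>?K. dist p' p < d \<longrightarrow> dist (br (fst p') (snd p')) (br (fst p) (snd p)) < \<rho>"
    using assms unfolding uniformly_continuous_on_def by blast
  define \<eta> where "\<eta> = min (d/2) (min (\<epsilon>/4) \<rho>)"
  have "dist (br a b) a \<le> \<rho>" if "a \<in> X" "b \<in> X" "dist a b \<le> \<eta>" for a b
  proof -
    have "(a, b) \<in> ?K" "(a, a) \<in> ?K" using that eps_pos by (auto simp: \<eta>_def)
    moreover have "dist (a, b) (a, a) < d"
      using that \<open>d > 0\<close> by (simp add: dist_Pair_Pair dist_commute \<eta>_def)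
    ultimately have "dist (br a b) (br a a) < \<rho>" using d by fastforce
    then show ?thesis using bracket_self that(1) by simp
  qed
  moreover have "\<eta> > 0" "\<eta> \<le> \<rho>" using \<open>d > 0\<close> eps_pos assms by (auto simp: \<eta>_def)
  ultimately show thesis using that by blast
qed

lemma bracket_of_forward_close:
  assumes ab: "a \<in> X" "b \<in> X" and R: "R > 0" "3*R < \<epsilon>" and "c \<le> R"
    and near: "\<forall>x\<in>X. \<forall>y\<in>X. dist x y \<le> c \<longrightarrow> dist (br x y) x \<le> R"
    and close: "\<forall>j\<le>M. dist ((f ^^ j) a) ((f ^^ j) b) \<le> c"
  shows "br a b \<in> X" and "br a (br a b) = br a b" and "br (br a b) b = br a b"
    and "dist (br a b) a \<le> R" and "dist (br a b) b \<le> lam ^ M * (2*R)"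
proof -
  define z where "z = br a b"
  have "dist a b \<le> c" using close by auto
  then have z: "z \<in> X" "dist z a \<le> R" using bracket_mem near ab \<open>c \<le> R\<close> R by (auto simp: z_def)
  have "dist z b < \<epsilon>" using dist_triangle[of z b a] z \<open>dist a b \<le> c\<close> \<open>c \<le> R\<close> R by linarith
  then have stable_az: "br a z = z" and unstable_zb: "br z b = z"
    using bracket_stable bracket_unstable ab z \<open>dist a b \<le> c\<close> \<open>c \<le> R\<close> R
    by (auto simp: z_def dist_commute)
  then show "br a b \<in> X" "br a (br a b) = br a b" "br (br a b) b = br a b" "dist (br a b) a \<le> R"
    using z by (simp_all add: z_def)
  have fw_close: "dist ((f ^^ j) z) ((f ^^ j) b) \<le> 2*R" if "j \<le> M" for j
  proof -
    have "dist ((f ^^ j) a) ((f ^^ j) z) \<le> dist a z"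
      using stable_funpow[OF ab(1) z(1) stable_az, of j] z R
        lam_pow_dist_le[of j a z] by (simp add: dist_commute)
    then show ?thesis
      using dist_triangle3[of "(f ^^ j) z" "(f ^^ j) b" "(f ^^ j) a"] z close[rule_format, OF that]
        \<open>c \<le> R\<close> by (simp add: dist_commute)
  qed
  have "\<forall>j\<le>M. dist ((f ^^ j) z) ((f ^^ j) b) < \<epsilon>"
  proof (intro allI impI)
    fix j assume "j \<le> M"
    then show "dist ((f ^^ j) z) ((f ^^ j) b) < \<epsilon>" using fw_close[of j] R by linarith
  qed
  then have "dist z b \<le> lam ^ M * dist ((f ^^ M) z) ((f ^^ M) b)"
    by (rule unstable_of_close_orbit[OF z(1) ab(2) unstable_zb])
  also have "\<dots> \<le> lam ^ M * (2*R)" using fw_close by (intro mult_left_mono lam_pow_nonneg) auto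
  finally show "dist (br a b) b \<le> lam ^ M * (2*R)" by (simp add: z_def)
qed

text \<open>Given orbits that stay \<open>c\<close>-close for \<open>2M\<close> steps, the bracket \<open>z\<close> of their
  middle points is forward asymptotic to one and backward asymptotic to the other; pulling back
  along each orbit contracts the corresponding distance by \<open>lam ^ M\<close>.\<close>

lemma uniformly_expansive:
  obtains c where "c > 0"
    and "\<And>u v M. u \<in> X \<Longrightarrow> v \<in> X \<Longrightarrow> \<forall>m\<le>2*M. dist ((f ^^ m) u) ((f ^^ m) v) \<le> c \<Longrightarrow>
           dist ((f ^^ M) u) ((f ^^ M) v) \<le> \<epsilon> * lam ^ M"
proof -
  define R where "R = \<epsilon>/8"
  have R: "R > 0" "3*R < \<epsilon>" "5*R \<le> \<epsilon>" using eps_pos by (auto simp: R_def)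
  obtain c where "c > 0" "c \<le> R"
    and near: "\<forall>a\<in>X. \<forall>b\<in>X. dist a b \<le> c \<longrightarrow> dist (br a b) a \<le> R"
    by (rule bracket_near_left[OF \<open>R > 0\<close>])
  have "dist ((f ^^ M) u) ((f ^^ M) v) \<le> \<epsilon> * lam ^ M"
    if uv: "u \<in> X" "v \<in> X" and close: "\<forall>m\<le>2*M. dist ((f ^^ m) u) ((f ^^ m) v) \<le> c" for u v M
  proof -
    define a where "a = (f ^^ M) u"
    define b where "b = (f ^^ M) v"
    define z where "z = br a b"
    have "a \<in> X" "b \<in> X" using funpow_in uv by (simp_all add: a_def b_def)
    moreover have "\<forall>j\<le>M. dist ((f ^^ j) a) ((f ^^ j) b) \<le> c"
      using close by (simp add: a_def b_def flip: funpow_add[unfolded comp_def, THEN fun_cong])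
    ultimately have z: "z \<in> X" "br a z = z" "br z b = z" "dist z b \<le> lam ^ M * (2*R)"
      using bracket_of_forward_close[OF _ _ R(1,2) \<open>c \<le> R\<close> near] by (simp_all add: z_def)
    have "lam ^ M * (2*R) \<le> 2*R" using R by (intro lam_pow_mult_le) simp
    then have "dist z b < \<epsilon>" using z(4) R by linarith
    obtain z0 where z0: "z0 \<in> X" "(f ^^ M) z0 = z" using funpow_onto z(1) by blast
    have bw_close: "dist ((f ^^ j) u) ((f ^^ j) z0) \<le> 3*R" if "j \<le> M" for j
    proof -
      have "dist ((f ^^ j) z0) ((f ^^ j) v) \<le> lam ^ (M - j) * dist z b"
        using unstable_funpow_le[OF z0(1) uv(2) _ _ that] z0 z(3) \<open>dist z b < \<epsilon>\<close>
        by (simp add: b_def)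
      also have "\<dots> \<le> 2*R"
        using lam_pow_dist_le[of "M - j" z b] z(4) \<open>lam ^ M * (2*R) \<le> 2*R\<close> by linarith
      finally have "dist ((f ^^ j) v) ((f ^^ j) z0) \<le> 2*R" by (simp add: dist_commute)
      moreover have "dist ((f ^^ j) u) ((f ^^ j) v) \<le> c" using close that by simp
      ultimately show ?thesis
        using dist_triangle[of "(f ^^ j) u" "(f ^^ j) z0" "(f ^^ j) v"] \<open>c \<le> R\<close> by linarith
    qed
    have "\<forall>j\<le>M. dist ((f ^^ j) u) ((f ^^ j) z0) < \<epsilon>"
    proof (intro allI impI)
      fix j assume "j \<le> M"
      then show "dist ((f ^^ j) u) ((f ^^ j) z0) < \<epsilon>" using bw_close[of j] R by linarith
    qed
    moreover have "br ((f ^^ M) u) ((f ^^ M) z0) = (f ^^ M) z0" using z0 z(2) by (simp add: a_def)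
    ultimately have "br u z0 = z0" using stable_of_close_orbit[OF uv(1) z0(1)] by blast
    moreover have "dist u z0 < \<epsilon>" using bw_close[of 0] R by simp
    ultimately have "dist ((f ^^ M) u) ((f ^^ M) z0) \<le> lam ^ M * dist u z0"
      using stable_funpow[OF uv(1) z0(1)] by blast
    then have "dist a z \<le> lam ^ M * dist u z0" using z0(2) by (simp add: a_def)
    also have "\<dots> \<le> lam ^ M * (3*R)" using bw_close[of 0] by (intro mult_left_mono lam_pow_nonneg) simp
    finally have "dist a b \<le> lam ^ M * (5*R)"
      using z(4) dist_triangle[of a b z] by (simp add: algebra_simps)
    also have "\<dots> \<le> lam ^ M * \<epsilon>" using R by (intro mult_left_mono lam_pow_nonneg)
    finally show ?thesis by (simp add: a_def b_def mult.commute)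
  qed
  with \<open>c > 0\<close> show thesis by (rule that)
qed

lemma bracket_chain:
  assumes R: "R > 0" "3*R < \<epsilon>" and "\<eta> \<le> R"
    and near: "\<forall>a\<in>X. \<forall>b\<in>X. dist a b \<le> \<eta> \<longrightarrow> dist (br a b) a \<le> R"
    and N: "lam ^ N * R \<le> \<eta>/2"
    and xs: "\<And>k. xs k \<in> X" "\<And>k. dist ((f ^^ N) (xs k)) (xs (Suc k)) \<le> \<eta>/2"
    and zs: "zs 0 = xs 0" "\<And>k. zs (Suc k) = br (xs (Suc k)) ((f ^^ N) (zs k))"
  shows "zs k \<in> X \<and> br (xs k) (zs k) = zs k \<and> dist (xs k) (zs k) \<le> R"
    and "br (zs (Suc k)) ((f ^^ N) (zs k)) = zs (Suc k) \<and> dist (zs (Suc k)) ((f ^^ N) (zs k)) \<le> 2*R"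
proof -
  have close: "dist (xs (Suc k)) ((f ^^ N) w) \<le> \<eta>"
    if "w \<in> X" "br (xs k) w = w" "dist (xs k) w \<le> R" for k w
  proof -
    have "dist ((f ^^ N) (xs k)) ((f ^^ N) w) \<le> lam ^ N * dist (xs k) w"
      using stable_funpow[OF xs(1) that(1,2)] that(3) R by simp
    also have "\<dots> \<le> lam ^ N * R" using that(3) by (intro mult_left_mono lam_pow_nonneg)
    finally show ?thesis
      using N xs(2)[of k] dist_triangle3[of "xs (Suc k)" "(f ^^ N) w" "(f ^^ N) (xs k)"] by linarith
  qed
  show zs_stable: "zs k \<in> X \<and> br (xs k) (zs k) = zs k \<and> dist (xs k) (zs k) \<le> R" for k
  proof (induction k)
    case 0 then show ?case using zs(1) xs(1) bracket_self R by simp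
  next
    case (Suc k)
    let ?w = "(f ^^ N) (zs k)"
    have w: "?w \<in> X" "dist (xs (Suc k)) ?w \<le> \<eta>" using funpow_in close Suc by auto
    then have "zs (Suc k) \<in> X" "dist (zs (Suc k)) (xs (Suc k)) \<le> R"
      using bracket_mem near xs(1) zs(2) \<open>\<eta> \<le> R\<close> R by auto
    moreover have "br (xs (Suc k)) (zs (Suc k)) = zs (Suc k)"
      using bracket_stable[OF xs(1) w(1)] w(2) calculation(2) zs(2) \<open>\<eta> \<le> R\<close> R
      by (simp add: dist_commute)
    ultimately show ?case by (simp add: dist_commute)
  qed
  let ?w = "(f ^^ N) (zs k)"
  have w: "?w \<in> X" "dist (xs (Suc k)) ?w \<le> \<eta>" using funpow_in close zs_stable by auto
  have "dist (zs (Suc k)) ?w \<le> 2*R"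
    using zs_stable[of "Suc k"] w(2) \<open>\<eta> \<le> R\<close> dist_triangle[of "zs (Suc k)" ?w "xs (Suc k)"]
    by (simp add: dist_commute)
  moreover have "br (zs (Suc k)) ?w = zs (Suc k)"
    using bracket_unstable[OF xs(1) w(1)] w(2) calculation zs(2) \<open>\<eta> \<le> R\<close> R by simp
  ultimately show "br (zs (Suc k)) ?w = zs (Suc k) \<and> dist (zs (Suc k)) ?w \<le> 2*R" by simp
qed

lemma unstable_pullback:
  assumes "y \<in> X" "z \<in> X" "z' \<in> X" "3*R < \<epsilon>"
    and "br ((f ^^ N) y) z' = (f ^^ N) y" "dist ((f ^^ N) y) z' \<le> R"
    and "br z' ((f ^^ N) z) = z'" "dist z' ((f ^^ N) z) \<le> 2*R" and "i \<le> N"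
  shows "br ((f ^^ i) y) ((f ^^ i) z) = (f ^^ i) y \<and> dist ((f ^^ i) y) ((f ^^ i) z) \<le> lam ^ (N - i) * (3*R)"
proof -
  have d: "dist ((f ^^ N) y) ((f ^^ N) z) \<le> 3*R"
    using assms(6,8) dist_triangle[of "(f ^^ N) y" "(f ^^ N) z" z'] by simp
  have "dist ((f ^^ N) y) z' < \<epsilon>" "dist z' ((f ^^ N) z) < \<epsilon>"
    "dist ((f ^^ N) y) ((f ^^ N) z) < \<epsilon>"
    using assms(4,6,8) d zero_le_dist[of "(f ^^ N) y" z'] by linarith+
  then have "br ((f ^^ N) y) ((f ^^ N) z) = (f ^^ N) y" "dist ((f ^^ N) y) ((f ^^ N) z) < \<epsilon>"
    using unstable_trans[OF funpow_in[OF assms(1)] assms(3) funpow_in[OF assms(2)] assms(5,7)]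
    by simp_all
  then have "br ((f ^^ i) y) ((f ^^ i) z) = (f ^^ i) y \<and>
      dist ((f ^^ i) y) ((f ^^ i) z) \<le> lam ^ (N - i) * dist ((f ^^ N) y) ((f ^^ N) z)"
    by (rule unstable_funpow_le[OF assms(1,2) _ _ assms(9)])
  then show ?thesis using mult_left_mono[OF d lam_pow_nonneg, of "N - i"] by linarith
qed

text \<open>The shadowing orbit is found backwards: starting from a preimage of the last point of
  the bracket chain and descending, it stays in the local unstable set of every chain point.\<close>

lemma shadowing:
  assumes R: "R > 0" "3*R < \<epsilon>" and "\<eta> \<le> R"
    and near: "\<forall>a\<in>X. \<forall>b\<in>X. dist a b \<le> \<eta> \<longrightarrow> dist (br a b) a \<le> R"
    and N: "lam ^ N * R \<le> \<eta>/2" "lam ^ N \<le> 1/3"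
    and xs: "\<And>k. xs k \<in> X" "\<And>k. dist ((f ^^ N) (xs k)) (xs (Suc k)) \<le> \<eta>/2"
  obtains y where "y \<in> X" and "\<And>k i. k < K \<Longrightarrow> i \<le> N \<Longrightarrow> dist ((f ^^ (k*N + i)) y) ((f ^^ i) (xs k)) \<le> 4*R"
proof -
  define zs where "zs = rec_nat (xs 0) (\<lambda>k z. br (xs (Suc k)) ((f ^^ N) z))"
  have zs_props: "zs k \<in> X \<and> br (xs k) (zs k) = zs k \<and> dist (xs k) (zs k) \<le> R"
    "br (zs (Suc k)) ((f ^^ N) (zs k)) = zs (Suc k) \<and> dist (zs (Suc k)) ((f ^^ N) (zs k)) \<le> 2*R" for k
    using bracket_chain[where xs = xs and zs = zs, OF R \<open>\<eta> \<le> R\<close> near N(1) xs]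
    by (simp_all add: zs_def)
  obtain y where y: "y \<in> X" "(f ^^ (K*N)) y = zs K" using funpow_onto zs_props by blast
  define Y where "Y k = (f ^^ (k*N)) y" for k
  have Y: "Y k \<in> X" "(f ^^ N) (Y k) = Y (Suc k)" for k
    using funpow_in y(1) by (simp_all add: Y_def add.commute flip: funpow_add[unfolded comp_def, THEN fun_cong])
  have pull_back: "br ((f ^^ i) (Y k)) ((f ^^ i) (zs k)) = (f ^^ i) (Y k) \<and>
      dist ((f ^^ i) (Y k)) ((f ^^ i) (zs k)) \<le> lam ^ (N - i) * (3*R)"
    if "br (Y (Suc k)) (zs (Suc k)) = Y (Suc k)" "dist (Y (Suc k)) (zs (Suc k)) \<le> R" "i \<le> N" for k i
    using unstable_pullback[of "Y k" "zs k" "zs (Suc k)" R N i] Y zs_props[of k] zs_props(1)[of "Suc k"]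
      that R by auto
  have down: "br (Y k) (zs k) = Y k \<and> dist (Y k) (zs k) \<le> R" if "k \<le> K" for k
    using that
  proof (induction k rule: inc_induct)
    case base then show ?case using y bracket_self R zs_props(1)[of K] by (simp add: Y_def)
  next
    case (step k)
    have "lam ^ N * (3*R) \<le> R" using N(2) R mult_right_mono[of "lam ^ N" "1/3" "3*R"] by simp
    then show ?case using pull_back[of k 0] step.IH by auto
  qed
  show thesis
  proof (rule that[OF y(1)])
    fix k i assume "k < K" "i \<le> N"
    have "dist ((f ^^ i) (Y k)) ((f ^^ i) (zs k)) \<le> lam ^ (N - i) * (3*R)"
      using pull_back[OF _ _ \<open>i \<le> N\<close>] down[of "Suc k"] \<open>k < K\<close> by simp
    also have "\<dots> \<le> 3*R" using R by (intro lam_pow_mult_le) simp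
    finally have "dist ((f ^^ i) (Y k)) ((f ^^ i) (zs k)) \<le> 3*R" .
    moreover have "dist ((f ^^ i) (xs k)) ((f ^^ i) (zs k)) \<le> R"
      using stable_funpow[OF xs(1), of "zs k" k i] zs_props(1)[of k] R
        lam_pow_dist_le[of i "xs k" "zs k"] by auto
    moreover have "(f ^^ (k*N + i)) y = (f ^^ i) (Y k)"
      by (simp add: Y_def add.commute flip: funpow_add[unfolded comp_def, THEN fun_cong])
    ultimately show "dist ((f ^^ (k*N + i)) y) ((f ^^ i) (xs k)) \<le> 4*R"
      using dist_triangle[of "(f ^^ i) (Y k)" "(f ^^ i) (xs k)" "(f ^^ i) (zs k)"]
      by (simp add: dist_commute)
  qed
qed

lemma periodic_pseudo_orbit:
  assumes "e > 0"
  obtains n xs where "n > 0" and "\<And>k. xs k \<in> X"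
    and "\<And>k. dist ((f ^^ N) (xs k)) (xs (Suc k)) \<le> e" and "\<And>k. xs (k + n) = xs k"
proof -
  obtain x0 where x0: "x0 \<in> X" using X_nonempty by blast
  obtain i j where "i < j" and ij: "dist ((f ^^ (i*N)) x0) ((f ^^ (j*N)) x0) < e"
    using compact_sequence_close_pair[OF compact_X, of "\<lambda>k. (f ^^ (k*N)) x0"] funpow_in[OF x0] assms
    by blast
  define n where "n = j - i"
  define x1 where "x1 = (f ^^ (i*N)) x0"
  have "(f ^^ (n*N)) x1 = (f ^^ (j*N)) x0"
  proof -
    have "n*N + i*N = j*N" using \<open>i < j\<close> by (simp add: n_def algebra_simps)
    then show ?thesis by (simp add: x1_def flip: funpow_add[unfolded comp_def, THEN fun_cong])
  qed
  then have return: "dist ((f ^^ (n*N)) x1) x1 < e" using ij by (simp add: x1_def dist_commute)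
  define xs where "xs k = (f ^^ ((k mod n)*N)) x1" for k
  have "dist ((f ^^ N) (xs k)) (xs (Suc k)) \<le> e" for k
  proof -
    have step: "(f ^^ N) (xs k) = (f ^^ (Suc (k mod n) * N)) x1"
      by (simp add: xs_def add.commute flip: funpow_add[unfolded comp_def, THEN fun_cong])
    show ?thesis
    proof (cases "Suc (k mod n) = n")
      case True
      then have "(f ^^ N) (xs k) = (f ^^ (n*N)) x1" "xs (Suc k) = x1"
        using step by (simp_all add: xs_def mod_Suc)
      then show ?thesis using return by simp
    next
      case False
      then have "xs (Suc k) = (f ^^ N) (xs k)" using step by (simp add: xs_def mod_Suc)
      then show ?thesis using assms by simp
    qed
  qed
  moreover have "n > 0" using \<open>i < j\<close> by (simp add: n_def)
  moreover have "xs k \<in> X" "xs (k + n) = xs k" for k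
    using funpow_in[OF funpow_in[OF x0]] by (simp_all add: xs_def x1_def)
  ultimately show thesis using that by blast
qed

text \<open>\<open>y\<close> and \<open>f\<^bsup>nN\<^esup> y\<close> shadow the same periodic pseudo-orbit for \<open>2M\<close> steps.\<close>

lemma shadowing_orbit_almost_periodic:
  assumes expansive: "\<And>u v M. u \<in> X \<Longrightarrow> v \<in> X \<Longrightarrow> \<forall>m\<le>2*M. dist ((f ^^ m) u) ((f ^^ m) v) \<le> c \<Longrightarrow>
           dist ((f ^^ M) u) ((f ^^ M) v) \<le> \<epsilon> * lam ^ M"
    and "8*R \<le> c" and "N > 0" and "n > 0" and periodic: "\<And>k. xs (k + n) = xs k"
    and "y \<in> X" and shadow: "\<And>k i. k < 2*L*n + n + 1 \<Longrightarrow> i \<le> N \<Longrightarrow>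
           dist ((f ^^ (k*N + i)) y) ((f ^^ i) (xs k)) \<le> 4*R"
  shows "\<exists>q\<in>X. dist q ((f ^^ (n*N)) q) \<le> \<epsilon> * lam ^ L"
proof -
  define P where "P = n*N"
  define M where "M = L*P"
  have "dist ((f ^^ m) y) ((f ^^ m) ((f ^^ P) y)) \<le> c" if "m \<le> 2*M" for m
  proof -
    define k where "k = m div N"
    define i where "i = m mod N"
    have m: "m = k*N + i" and "i \<le> N" using \<open>N > 0\<close> by (simp_all add: k_def i_def)
    have "k*N \<le> m" using m by simp
    also have "m \<le> (2*L*n)*N" using that by (simp add: M_def P_def)
    finally have "k \<le> 2*L*n" using \<open>N > 0\<close> mult_le_cancel2 by blast
    have "(f ^^ m) ((f ^^ P) y) = (f ^^ ((k+n)*N + i)) y"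
      by (simp add: m P_def algebra_simps flip: funpow_add[unfolded comp_def, THEN fun_cong])
    moreover have "dist ((f ^^ m) y) ((f ^^ i) (xs k)) \<le> 4*R"
      using shadow \<open>k \<le> 2*L*n\<close> \<open>i \<le> N\<close> m by simp
    moreover have "dist ((f ^^ ((k+n)*N + i)) y) ((f ^^ i) (xs k)) \<le> 4*R"
      using shadow[of "k+n" i] \<open>k \<le> 2*L*n\<close> \<open>i \<le> N\<close> periodic by simp
    ultimately show ?thesis
      using dist_triangle2[of "(f ^^ m) y" "(f ^^ m) ((f ^^ P) y)" "(f ^^ i) (xs k)"] \<open>8*R \<le> c\<close>
      by simp
  qed
  then have "dist ((f ^^ M) y) ((f ^^ M) ((f ^^ P) y)) \<le> \<epsilon> * lam ^ M"
    using expansive \<open>y \<in> X\<close> funpow_in by blast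
  moreover have "(f ^^ M) ((f ^^ P) y) = (f ^^ P) ((f ^^ M) y)"
    by (simp add: add.commute flip: funpow_add[unfolded comp_def, THEN fun_cong])
  moreover have "\<epsilon> * lam ^ M \<le> \<epsilon> * lam ^ L"
    using \<open>N > 0\<close> \<open>n > 0\<close> lam_pos lam_less_1 eps_pos
    by (intro mult_left_mono power_decreasing) (auto simp: M_def P_def)
  ultimately show ?thesis using funpow_in \<open>y \<in> X\<close> unfolding P_def by (metis order_trans)
qed

lemma closing_lemma:
  obtains P where "P > 0" and "\<And>L. \<exists>q\<in>X. dist q ((f ^^ P) q) \<le> \<epsilon> * lam ^ L"
proof -
  obtain c where "c > 0"
    and expansive: "\<And>u v M. u \<in> X \<Longrightarrow> v \<in> X \<Longrightarrow> \<forall>m\<le>2*M. dist ((f ^^ m) u) ((f ^^ m) v) \<le> c \<Longrightarrow>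
           dist ((f ^^ M) u) ((f ^^ M) v) \<le> \<epsilon> * lam ^ M"
    using uniformly_expansive by blast
  define R where "R = min (c/8) (\<epsilon>/4)"
  have R: "R > 0" "3*R < \<epsilon>" "8*R \<le> c" using \<open>c > 0\<close> eps_pos by (auto simp: R_def)
  obtain \<eta> where "\<eta> > 0" "\<eta> \<le> R"
    and near: "\<forall>a\<in>X. \<forall>b\<in>X. dist a b \<le> \<eta> \<longrightarrow> dist (br a b) a \<le> R"
    by (rule bracket_near_left[OF \<open>R > 0\<close>])
  have "min (\<eta>/(2*R)) (1/3) > 0" using \<open>\<eta> > 0\<close> R by simp
  then obtain N where "lam ^ N < min (\<eta>/(2*R)) (1/3)"
    using real_arch_pow_inv[OF _ lam_less_1] by blast
  then have N: "lam ^ N * R \<le> \<eta>/2" "lam ^ N \<le> 1/3"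
    using R by (auto simp: field_simps)
  then have "N > 0" by (cases N) auto
  obtain n xs where "n > 0" and xs: "\<And>k. xs k \<in> X" "\<And>k. dist ((f ^^ N) (xs k)) (xs (Suc k)) \<le> \<eta>/2"
    and periodic: "\<And>k. xs (k + n) = xs k"
    using periodic_pseudo_orbit[of "\<eta>/2" N] \<open>\<eta> > 0\<close> by auto
  show thesis
  proof (rule that[of "n*N"])
    show "n*N > 0" using \<open>n > 0\<close> \<open>N > 0\<close> by simp
    fix L
    obtain y where "y \<in> X" and "\<And>k i. k < 2*L*n + n + 1 \<Longrightarrow> i \<le> N \<Longrightarrow>
        dist ((f ^^ (k*N + i)) y) ((f ^^ i) (xs k)) \<le> 4*R"
      using shadowing[where xs = xs and K = "2*L*n + n + 1", OF R(1,2) \<open>\<eta> \<le> R\<close> near N xs]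
      by blast
    then show "\<exists>q\<in>X. dist q ((f ^^ (n*N)) q) \<le> \<epsilon> * lam ^ L"
      using shadowing_orbit_almost_periodic[where xs = xs and L = L, OF expansive R(3) \<open>N > 0\<close> \<open>n > 0\<close> periodic] by blast
  qed
qed

lemma periodic_point_exists:
  obtains P p where "P > 0" and "p \<in> X" and "(f ^^ P) p = p"
proof -
  obtain P where "P > 0" and almost: "\<And>L. \<exists>q\<in>X. dist q ((f ^^ P) q) \<le> \<epsilon> * lam ^ L"
    using closing_lemma by blast
  have "continuous_on X (\<lambda>q. dist q ((f ^^ P) q))"
    by (intro continuous_on_dist continuous_on_id continuous_on_funpow_f)
  then obtain p where "p \<in> X" and min: "\<forall>q\<in>X. dist p ((f ^^ P) p) \<le> dist q ((f ^^ P) q)"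
    using continuous_attains_inf[OF compact_X X_nonempty] by blast
  have "dist p ((f ^^ P) p) \<le> \<epsilon> * lam ^ L" for L
    using almost[of L] min order_trans by blast
  then have "dist p ((f ^^ P) p) \<le> 0"
    using lam_pos lam_less_1 by (intro le_geometric_imp_nonpos) auto
  then show thesis using that \<open>P > 0\<close> \<open>p \<in> X\<close> by simp
qed

lemma periodic_points_separated:
  assumes "P > 0"
  obtains \<gamma> where "\<gamma> > 0"
    and "\<And>p q. p \<in> X \<Longrightarrow> q \<in> X \<Longrightarrow> (f ^^ P) p = p \<Longrightarrow> (f ^^ P) q = q \<Longrightarrow> dist p q < \<gamma> \<Longrightarrow> p = q"
proof -
  obtain c where "c > 0"
    and expansive: "\<And>u v M. u \<in> X \<Longrightarrow> v \<in> X \<Longrightarrow> \<forall>m\<le>2*M. dist ((f ^^ m) u) ((f ^^ m) v) \<le> c \<Longrightarrow>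
           dist ((f ^^ M) u) ((f ^^ M) v) \<le> \<epsilon> * lam ^ M"
    using uniformly_expansive by blast
  obtain \<gamma> where "\<gamma> > 0"
    and \<gamma>: "\<forall>a\<in>X. \<forall>b\<in>X. dist a b < \<gamma> \<longrightarrow> (\<forall>m<P. dist ((f ^^ m) a) ((f ^^ m) b) \<le> c)"
    using uniformly_continuous_on_iterates[OF compact_X continuous_f _ \<open>c > 0\<close>]
      bij_betw_imp_surj_on[OF bij_f] by blast
  have "p = q" if "p \<in> X" "q \<in> X" "(f ^^ P) p = p" "(f ^^ P) q = q" "dist p q < \<gamma>" for p q
  proof -
    have "dist ((f ^^ m) p) ((f ^^ m) q) \<le> c" for m
      using \<gamma> that funpow_mod_eq[where m = m, OF that(3)] funpow_mod_eq[where m = m, OF that(4)]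
        \<open>P > 0\<close> by (metis mod_less_divisor)
    moreover have "(f ^^ (t*P)) p = p" "(f ^^ (t*P)) q = q" for t
      using funpow_mod_eq[where m = "t*P", OF that(3)] funpow_mod_eq[where m = "t*P", OF that(4)]
      by simp_all
    ultimately have "dist p q \<le> \<epsilon> * lam ^ (t*P)" for t
      using expansive[OF that(1,2), of "t*P"] by simp
    moreover have "\<epsilon> * lam ^ (t*P) \<le> \<epsilon> * lam ^ t" for t
      using \<open>P > 0\<close> lam_pos lam_less_1 eps_pos by (intro mult_left_mono power_decreasing) auto
    ultimately have "dist p q \<le> \<epsilon> * lam ^ t" for t by (meson order_trans)
    then have "dist p q \<le> 0" using lam_pos lam_less_1 by (intro le_geometric_imp_nonpos) auto
    then show ?thesis by simp
  qed
  with \<open>\<gamma> > 0\<close> show thesis by (rule that)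
qed

lemma commuting_bij_has_periodic_point:
  assumes bij_h: "bij_betw h X X" and commute: "\<And>x. x \<in> X \<Longrightarrow> h (f x) = f (h x)"
  obtains p n where "p \<in> X" and "n > 0" and "(h ^^ n) p = p"
proof -
  obtain P p where "P > 0" "p \<in> X" "(f ^^ P) p = p" by (rule periodic_point_exists)
  obtain \<gamma> where "\<gamma> > 0" and separated: "\<And>p q. p \<in> X \<Longrightarrow> q \<in> X \<Longrightarrow> (f ^^ P) p = p \<Longrightarrow>
      (f ^^ P) q = q \<Longrightarrow> dist p q < \<gamma> \<Longrightarrow> p = q"
    using periodic_points_separated[OF \<open>P > 0\<close>] by blast
  have "f ` X \<subseteq> X" "h ` X \<subseteq> X"
    using bij_betw_imp_surj_on[OF bij_f] bij_betw_imp_surj_on[OF bij_h] by simp_all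
  have "(f ^^ P) (h x) = h ((f ^^ P) x)" if "x \<in> X" for x
    using funpow_commute_on[where h = h, OF commute \<open>f ` X \<subseteq> X\<close> that] by simp
  from funpow_commute_on[where h = "f ^^ P" and f = h, OF this \<open>h ` X \<subseteq> X\<close> \<open>p \<in> X\<close>]
  have periodic: "(f ^^ P) ((h ^^ k) p) = (h ^^ k) p" for k
    using \<open>(f ^^ P) p = p\<close> by simp
  have orbit: "(h ^^ k) p \<in> X" for k using bij_betw_funpow[OF bij_h] \<open>p \<in> X\<close> by (rule bij_betw_apply)
  obtain i j where "i < j" and "dist ((h ^^ i) p) ((h ^^ j) p) < \<gamma>"
    by (rule compact_sequence_close_pair[OF compact_X orbit \<open>\<gamma> > 0\<close>])
  then have "(h ^^ i) p = (h ^^ j) p" using separated[OF orbit orbit periodic periodic] by blast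
  then have "(h ^^ i) ((h ^^ (j - i)) p) = (h ^^ i) p"
    using \<open>i < j\<close> by (simp flip: funpow_add[unfolded comp_def, THEN fun_cong])
  then have "(h ^^ (j - i)) p = p"
    using inj_onD[OF bij_betw_imp_inj_on[OF bij_betw_funpow[OF bij_h]]] orbit \<open>p \<in> X\<close> by blast
  moreover have "j - i > 0" using \<open>i < j\<close> by simp
  ultimately show thesis using that \<open>p \<in> X\<close> by blast
qed

end

lemma smale_action_pow:
  assumes "group G" and "smale_action G X \<phi> act" and "g \<in> carrier G" and "x \<in> X"
  shows "act (g [^]\<^bsub>G\<^esub> n) x = (act g ^^ n) x"
  using assms(4)
proof (induction n arbitrary: x)
  case 0
  then show ?case using assms(2) by (simp add: smale_action_def)
next
  case (Suc n)
  obtain h where "homeomorphism X X (act g) h" using assms(2,3) by (auto simp: smale_action_def)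
  then have "act g x \<in> X" using Suc.prems by (auto simp: homeomorphism_def)
  have "act (g [^]\<^bsub>G\<^esub> Suc n) x = act (g [^]\<^bsub>G\<^esub> n) (act g x)"
    using assms Suc.prems monoid.nat_pow_closed[OF group.is_monoid[OF assms(1)]]
    by (simp add: smale_action_def)
  also have "\<dots> = (act g ^^ Suc n) x" using Suc.IH[OF \<open>act g x \<in> X\<close>] by (simp add: funpow_swap1)
  finally show ?case .
qed

theorem proposition2p6:
  fixes G (structure)
    and X :: "'a::metric_space set" and \<phi> :: "'a \<Rightarrow> 'a" and act :: "'g \<Rightarrow> 'a \<Rightarrow> 'a"
  assumes "group G"
    and "g \<in> carrier G" and "group.ord G g = 0"
    and "smale_space X \<phi>"
    and "smale_action G X \<phi> act"
  shows "\<not> free_action G X act"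
proof
  assume free: "free_action G X act"
  obtain \<epsilon> lam br where "smale_bracket X \<phi> \<epsilon> lam br" using assms(4) by (rule smale_spaceE)
  then interpret smale_bracket X \<phi> \<epsilon> lam br .
  have "bij_betw (act g) X X" and "\<And>x. x \<in> X \<Longrightarrow> act g (\<phi> x) = \<phi> (act g x)"
    using assms(5,2) by (auto simp: smale_action_def intro: homeomorphism_bij_betw)
  then obtain p n where "p \<in> X" "n > 0" "(act g ^^ n) p = p"
    by (rule commuting_bij_has_periodic_point)
  then have "g [^] n = \<one>"
    using free smale_action_pow[OF assms(1,5,2)] unfolding free_action_def
    by (simp add: monoid.nat_pow_closed[OF group.is_monoid[OF assms(1)]] assms(2))
  then show False using group.ord_eq_0[OF assms(1,2)] assms(3) \<open>n > 0\<close> by simp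
qed

end
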